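(* Let $a<b$ be real numbers and let $0<\alpha,\beta\leq 1$ with $1<\alpha+\beta\leq 2$. Define $G:[a,b]\times[a,b]\to\mathbb{R}$ by $$G(t,r)=\begin{cases}\dfrac{1}{\Gamma(\alpha)\Gamma(\beta)}\displaystyle\int_a^r (t-s)^{\beta-1}(r-s)^{\alpha-1}\,ds, & a\leq r\leq t\leq b,\\[0.3cm] \dfrac{1}{\Gamma(\alpha)\Gamma(\beta)}\displaystyle\int_a^t (t-s)^{\beta-1}(r-s)^{\alpha-1}\,ds, & a\leq t\leq r\leq b.\end{cases}$$ Then: (1) $G(t,r)\geq 0$ for all $a\leq r\leq t\leq b$; (2) $\max_{t\in[a,b]}G(t,r)=G(r,r)$ for all $r\in[a,b]$; (3) $\max_{r\in[a,b]}G(r,r)=\dfrac{(b-a)^{\alpha+\beta-1}}{(\alpha+\beta-1)\Gamma(\alpha)\Gamma(\beta)}$.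
   Context: $\Gamma$ denotes the Gamma function. *)

theory Defs
  imports "HOL-Analysis.Analysis"
begin

definition Gker :: "real \<Rightarrow> real \<Rightarrow> real \<Rightarrow> real \<Rightarrow> real \<Rightarrow> real" where
  "Gker a \<alpha> \<beta> t r =
     (if r \<le> t
      then (1 / (Gamma \<alpha> * Gamma \<beta>)) *
             integral {a..r} (\<lambda>s. (t - s) powr (\<beta> - 1) * (r - s) powr (\<alpha> - 1))
      else (1 / (Gamma \<alpha> * Gamma \<beta>)) *
             integral {a..t} (\<lambda>s. (t - s) powr (\<beta> - 1) * (r - s) powr (\<alpha> - 1)))"

end

theory Submission
  imports Defs
begin

text \<open>On the diagonal the two power factors merge into \<open>(r - s) powr (\<alpha> + \<beta> - 2)\<close>, whose
  integral is explicit. Off the diagonal, with \<open>m = min t r\<close>, both exponents are \<open>\<le> 0\<close>, so each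
  factor only grows when its base is lowered to \<open>m - s\<close>; hence \<open>G(t,r) \<le> G(m,m)\<close>, and \<open>G(r,r)\<close> is
  increasing in \<open>r\<close> with maximum at \<open>r = b\<close>.\<close>

lemma has_integral_powr_diff:
  fixes a r c :: real
  assumes "a \<le> r" "c > -1"
  shows "((\<lambda>s. (r - s) powr c) has_integral (r - a) powr (c + 1) / (c + 1)) {a..r}"
proof -
  have "((\<lambda>x. x powr c) has_integral (r - a) powr (c + 1) / (c + 1)) {0..r - a}"
    by (rule has_integral_powr_from_0) (use assms in auto)
  from has_integral_reflect_lemma_real[OF this]
  have "((\<lambda>x. (- x) powr c) has_integral (r - a) powr (c + 1) / (c + 1)) {- (r - a)..- 0}" .
  from has_integral_shift_real_ivl[OF this, of "- r"] show ?thesis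
    by simp
qed

text \<open>No integrability of \<open>f\<close> is needed: a non-integrable \<open>f\<close> has integral \<open>0\<close>.\<close>

lemma integral_le_has_integral_nonneg:
  fixes f g :: "'a::euclidean_space \<Rightarrow> real"
  assumes "(g has_integral I) S" "0 \<le> I" "\<And>x. x \<in> S \<Longrightarrow> f x \<le> g x"
  shows "integral S f \<le> I"
proof (cases "f integrable_on S")
  case True
  then show ?thesis
    using has_integral_le[OF integrable_integral[OF True] assms(1)] assms(3) by blast
qed (use assms(2) in \<open>simp add: not_integrable_integral\<close>)

lemma integral_nonneg_any:
  fixes f :: "'a::euclidean_space \<Rightarrow> real"
  assumes "\<And>x. x \<in> S \<Longrightarrow> 0 \<le> f x"
  shows "0 \<le> integral S f"
proof (cases "f integrable_on S")
  case True
  then show ?thesis using integral_nonneg assms by blast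
qed (simp add: not_integrable_integral)

lemma powr_mult_le_min_powr:
  fixes y z u v :: real
  assumes "0 \<le> y" "0 \<le> z" "u \<le> 0" "v \<le> 0"
  shows "y powr u * z powr v \<le> min y z powr (u + v)"
proof (cases "min y z = 0")
  case True
  then have "y = 0 \<or> z = 0" by linarith
  then show ?thesis by auto
next
  case False
  then have m: "0 < min y z" using assms by linarith
  have "y powr u \<le> min y z powr u" "z powr v \<le> min y z powr v"
    using powr_mono2'[OF assms(3) m] powr_mono2'[OF assms(4) m] by auto
  then have "y powr u * z powr v \<le> min y z powr u * min y z powr v"
    by (intro mult_mono) auto
  then show ?thesis by (simp add: powr_add)
qed

lemma Gker_eq_integral_min:
  "Gker a \<alpha> \<beta> t r =
     integral {a..min t r} (\<lambda>s. (t - s) powr (\<beta> - 1) * (r - s) powr (\<alpha> - 1))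
       / (Gamma \<alpha> * Gamma \<beta>)"
  by (simp add: Gker_def min_def)

lemma Gker_nonneg:
  assumes "0 < \<alpha>" "0 < \<beta>"
  shows "0 \<le> Gker a \<alpha> \<beta> t r"
  unfolding Gker_eq_integral_min
  using assms by (intro divide_nonneg_pos integral_nonneg_any) (auto intro: Gamma_real_pos)

lemma Gker_diag:
  assumes "a \<le> r" "1 < \<alpha> + \<beta>"
  shows "Gker a \<alpha> \<beta> r r = (r - a) powr (\<alpha> + \<beta> - 1) / ((\<alpha> + \<beta> - 1) * Gamma \<alpha> * Gamma \<beta>)"
proof -
  have "integral {a..r} (\<lambda>s. (r - s) powr (\<beta> - 1) * (r - s) powr (\<alpha> - 1))
      = integral {a..r} (\<lambda>s. (r - s) powr (\<alpha> + \<beta> - 2))"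
    by (simp add: powr_add[symmetric] add_ac)
  also have "\<dots> = (r - a) powr (\<alpha> + \<beta> - 1) / (\<alpha> + \<beta> - 1)"
    using has_integral_powr_diff[OF assms(1), of "\<alpha> + \<beta> - 2"] assms(2)
    by (intro integral_unique) simp
  finally show ?thesis by (simp add: Gker_eq_integral_min)
qed

lemma Gker_diag_mono:
  assumes "a \<le> r" "r \<le> r'" "0 < \<alpha>" "0 < \<beta>" "1 < \<alpha> + \<beta>"
  shows "Gker a \<alpha> \<beta> r r \<le> Gker a \<alpha> \<beta> r' r'"
proof -
  have "(r - a) powr (\<alpha> + \<beta> - 1) \<le> (r' - a) powr (\<alpha> + \<beta> - 1)"
    using assms by (intro powr_mono2) auto
  then show ?thesis
    using assms by (simp add: Gker_diag divide_right_mono Gamma_real_pos)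
qed

lemma Gker_le_Gker_min_diag:
  assumes "a \<le> t" "a \<le> r" "0 < \<alpha>" "\<alpha> \<le> 1" "0 < \<beta>" "\<beta> \<le> 1" "1 < \<alpha> + \<beta>"
  defines "m \<equiv> min t r"
  shows "Gker a \<alpha> \<beta> t r \<le> Gker a \<alpha> \<beta> m m"
proof -
  have "integral {a..m} (\<lambda>s. (t - s) powr (\<beta> - 1) * (r - s) powr (\<alpha> - 1))
      \<le> (m - a) powr (\<alpha> + \<beta> - 1) / (\<alpha> + \<beta> - 1)"
  proof (rule integral_le_has_integral_nonneg)
    show "((\<lambda>s. (m - s) powr (\<alpha> + \<beta> - 2)) has_integral
        (m - a) powr (\<alpha> + \<beta> - 1) / (\<alpha> + \<beta> - 1)) {a..m}"
      using has_integral_powr_diff[of a m "\<alpha> + \<beta> - 2"] assms by simp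
    fix s assume "s \<in> {a..m}"
    then have "(t - s) powr (\<beta> - 1) * (r - s) powr (\<alpha> - 1) \<le> min (t - s) (r - s) powr (\<alpha> + \<beta> - 2)"
      using powr_mult_le_min_powr[of "t - s" "r - s" "\<beta> - 1" "\<alpha> - 1"] assms
      by (simp add: add_ac)
    then show "(t - s) powr (\<beta> - 1) * (r - s) powr (\<alpha> - 1) \<le> (m - s) powr (\<alpha> + \<beta> - 2)"
      by (simp add: m_def min_diff_distrib_left)
  qed (use assms in simp)
  then have "Gker a \<alpha> \<beta> t r \<le> (m - a) powr (\<alpha> + \<beta> - 1) / (\<alpha> + \<beta> - 1) / (Gamma \<alpha> * Gamma \<beta>)"
    unfolding Gker_eq_integral_min m_def
    using assms by (intro divide_right_mono) (auto intro: Gamma_real_pos)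
  also have "\<dots> = Gker a \<alpha> \<beta> m m"
    using assms by (simp add: Gker_diag m_def)
  finally show ?thesis .
qed

theorem lemma3:
  fixes a b \<alpha> \<beta> :: real
  assumes "a < b"
    and "0 < \<alpha>" "\<alpha> \<le> 1" "0 < \<beta>" "\<beta> \<le> 1"
    and "1 < \<alpha> + \<beta>" "\<alpha> + \<beta> \<le> 2"
  shows "(\<forall>r t. a \<le> r \<and> r \<le> t \<and> t \<le> b \<longrightarrow> Gker a \<alpha> \<beta> t r \<ge> 0)
    \<and> (\<forall>r\<in>{a..b}. \<forall>t\<in>{a..b}. Gker a \<alpha> \<beta> t r \<le> Gker a \<alpha> \<beta> r r)
    \<and> (\<forall>r\<in>{a..b}. Gker a \<alpha> \<beta> r r
          \<le> (b - a) powr (\<alpha> + \<beta> - 1) / ((\<alpha> + \<beta> - 1) * Gamma \<alpha> * Gamma \<beta>))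
    \<and> (\<exists>r\<in>{a..b}. Gker a \<alpha> \<beta> r r
          = (b - a) powr (\<alpha> + \<beta> - 1) / ((\<alpha> + \<beta> - 1) * Gamma \<alpha> * Gamma \<beta>))"
proof (intro conjI ballI allI impI)
  show "0 \<le> Gker a \<alpha> \<beta> t r" for r t
    using assms by (simp add: Gker_nonneg)
  fix r assume r: "r \<in> {a..b}"
  show "Gker a \<alpha> \<beta> t r \<le> Gker a \<alpha> \<beta> r r" if "t \<in> {a..b}" for t
  proof -
    have "Gker a \<alpha> \<beta> t r \<le> Gker a \<alpha> \<beta> (min t r) (min t r)"
      using assms r that by (intro Gker_le_Gker_min_diag) auto
    also have "\<dots> \<le> Gker a \<alpha> \<beta> r r"
      using assms r that by (intro Gker_diag_mono) auto
    finally show ?thesis .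
  qed
  have "Gker a \<alpha> \<beta> r r \<le> Gker a \<alpha> \<beta> b b"
    using assms r by (intro Gker_diag_mono) auto
  then show "Gker a \<alpha> \<beta> r r
      \<le> (b - a) powr (\<alpha> + \<beta> - 1) / ((\<alpha> + \<beta> - 1) * Gamma \<alpha> * Gamma \<beta>)"
    using assms by (simp add: Gker_diag)
next
  show "\<exists>r\<in>{a..b}. Gker a \<alpha> \<beta> r r
      = (b - a) powr (\<alpha> + \<beta> - 1) / ((\<alpha> + \<beta> - 1) * Gamma \<alpha> * Gamma \<beta>)"
    using assms by (intro bexI[of _ b]) (auto simp: Gker_diag)
qed

end
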